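(* Let $m=2^\theta\mu$ with $\theta\ge1$ and $\mu$ odd. The graph $\mathcal{A}_\mu$ is a disjoint union of directed cycles. The graph $\mathcal{A}_m$ is isomorphic to the graph obtained from $\mathcal{A}_\mu$ by replacing each cycle of length $\alpha$ by a copy of the flower cycle $C_\alpha(T_2^\theta)$. Equivalently, $\mathcal{A}_m$ is the disjoint union over the cycles of $\mathcal{A}_\mu$ of graphs $C_\alpha(T_2^\theta)$, where $\alpha$ is the length of the corresponding cycle.
   Context: For a positive integer $m$, $\mathcal{A}_m$ is the directed graph on $\{0,\dots,m-1\}$ with an edge $x\to 2x\bmod m$ for each $x$. A grounded tree is a finite directed graph in which every vertex has out-degree one, a root vertex has a loop, the graph is a tree after deleting this loop, and every vertex has a directed path to the root. The regular grounded tree $T_w^\ell$ ($w\ge1,\ell\ge1$) has $w^\ell$ vertices in layers $0,\dots,\ell$. Layer $0$ is the root, with a loop. Layer $1$ has $w-1$ vertices mapping to the root. Each vertex of layer $j<\ell$, $j\ge1$, has exactly $w$ vertices of layer $j+1$ mapping to it. Layer $\ell$ consists of leaves. For $\alpha\ge1$ and a grounded tree $T$, the flower cycle $C_\alpha(T)$ is built as follows: take $\alpha$ disjoint copies of $T$, delete the root loops, and add an edge from the root of copy $i$ to the root of copy $i+1$, with indices mod $\alpha$. *)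

theory Defs
  imports Main
begin

text \<open>Functional digraphs (every vertex has out-degree one) are represented by a
  vertex set V together with the successor function f (edge x -> f x).\<close>

definition fg_iso :: "'a set \<Rightarrow> ('a \<Rightarrow> 'a) \<Rightarrow> 'b set \<Rightarrow> ('b \<Rightarrow> 'b) \<Rightarrow> bool" where
  "fg_iso V f W g \<longleftrightarrow> (\<exists>h. bij_betw h V W \<and> (\<forall>x\<in>V. h (f x) = g (h x)))"

definition A_verts :: "nat \<Rightarrow> nat set" where
  "A_verts m = {0..<m}"

definition A_map :: "nat \<Rightarrow> nat \<Rightarrow> nat" where
  "A_map m x = (2 * x) mod m"

text \<open>A functional digraph is a disjoint union of directed cycles iff every vertex lies on a cycle.\<close>
definition is_cycle_union :: "'a set \<Rightarrow> ('a \<Rightarrow> 'a) \<Rightarrow> bool" where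
  "is_cycle_union V f \<longleftrightarrow> f ` V \<subseteq> V \<and> (\<forall>x\<in>V. \<exists>n>0. (f ^^ n) x = x)"

text \<open>The cycle (connected component) of a vertex x, i.e. its forward orbit.\<close>
definition orbit_of :: "('a \<Rightarrow> 'a) \<Rightarrow> 'a \<Rightarrow> 'a set" where
  "orbit_of f x = {(f ^^ k) x | k. True}"

definition cycles_of :: "'a set \<Rightarrow> ('a \<Rightarrow> 'a) \<Rightarrow> 'a set set" where
  "cycles_of V f = orbit_of f ` V"

text \<open>The regular grounded tree T_w^l: vertices are lists; the root is [], layer 1 consists of
  [a] with 1 \<le> a < w (w-1 vertices), and a vertex v of layer j (1 \<le> j < l) has the w children
  v @ [b], b < w.  Every vertex maps to its parent (butlast), the root to itself (loop).\<close>
definition tree_verts :: "nat \<Rightarrow> nat \<Rightarrow> nat list set" where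
  "tree_verts w l = {xs. length xs \<le> l \<and> (xs \<noteq> [] \<longrightarrow> 1 \<le> hd xs \<and> hd xs < w)
                        \<and> (\<forall>i. 0 < i \<and> i < length xs \<longrightarrow> xs ! i < w)}"

definition tree_map :: "nat list \<Rightarrow> nat list" where
  "tree_map xs = butlast xs"

definition tree_root :: "nat list" where
  "tree_root = []"

text \<open>Flower cycle C_alpha(T) of a grounded tree T = (V, f, r): alpha copies indexed by
  i < alpha, root loops removed, root of copy i mapped to root of copy (i+1) mod alpha.\<close>
definition flower_verts :: "nat \<Rightarrow> 'a set \<Rightarrow> (nat \<times> 'a) set" where
  "flower_verts \<alpha> V = {0..<\<alpha>} \<times> V"

definition flower_map :: "nat \<Rightarrow> ('a \<Rightarrow> 'a) \<Rightarrow> 'a \<Rightarrow> nat \<times> 'a \<Rightarrow> nat \<times> 'a" where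
  "flower_map \<alpha> f r p = (if snd p = r then ((fst p + 1) mod \<alpha>, r) else (fst p, f (snd p)))"

text \<open>Disjoint union, over the cycles c of A_mu, of the flower cycles C_{|c|}(T_2^theta).\<close>
definition union_verts :: "nat \<Rightarrow> nat \<Rightarrow> (nat set \<times> nat \<times> nat list) set" where
  "union_verts \<mu> \<theta> = (SIGMA c : cycles_of (A_verts \<mu>) (A_map \<mu>).
                          flower_verts (card c) (tree_verts 2 \<theta>))"

definition union_map :: "(nat set \<times> nat \<times> nat list) \<Rightarrow> (nat set \<times> nat \<times> nat list)" where
  "union_map q = (fst q, flower_map (card (fst q)) tree_map tree_root (snd q))"

end

theory Submission
  imports Defs "HOL-Combinatorics.Orbits" "HOL-Number_Theory.Residues"
begin

text \<open>By the Chinese remainder theorem, \<open>x \<mapsto> (x mod 2 ^ \<theta>, x mod \<mu>)\<close> identifies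
  \<open>\<A>\<^sub>m\<close> with the product of \<open>\<A>\<^bsub>2^\<theta>\<^esub>\<close> and \<open>\<A>\<^sub>\<mu>\<close>. Doubling is invertible modulo the
  odd \<open>\<mu>\<close>, so some power of it (Euler's theorem) is the identity and \<open>\<A>\<^sub>\<mu>\<close> is a union of
  cycles. \<open>\<A>\<^bsub>2^\<theta>\<^esub>\<close> is the tree \<open>T\<^sub>2\<^sup>\<theta>\<close>: the residues of 2-adic valuation \<open>\<theta> - j\<close>
  form layer \<open>j\<close>. Finally, in the product of a grounded tree with a cycle of length \<open>\<alpha>\<close>, a
  pair \<open>(x, u)\<close> with \<open>x\<close> at depth \<open>d\<close> reaches the root after \<open>d\<close> steps, over \<open>f\<^sup>d u\<close>;
  recording \<open>x\<close> in the copy indexed by \<open>f\<^sup>d u\<close> turns the product into \<open>C\<^sub>\<alpha>(T)\<close>.\<close>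

lemma fg_iso_refl: "fg_iso V f V f"
  unfolding fg_iso_def by (intro exI[of _ id]) simp

lemma fg_iso_trans:
  assumes "fg_iso V f W g" and "fg_iso W g X k"
  shows "fg_iso V f X k"
proof -
  obtain h where h: "bij_betw h V W" "\<forall>x\<in>V. h (f x) = g (h x)"
    using assms(1) unfolding fg_iso_def by blast
  obtain h' where h': "bij_betw h' W X" "\<forall>y\<in>W. h' (g y) = k (h' y)"
    using assms(2) unfolding fg_iso_def by blast
  have "\<forall>x\<in>V. (h' \<circ> h) (f x) = k ((h' \<circ> h) x)"
    using h h' by (auto simp: bij_betw_def)
  then show ?thesis
    unfolding fg_iso_def using bij_betw_trans[OF h(1) h'(1)] by blast
qed

lemma fg_iso_sym:
  assumes "fg_iso V f W g" and "f ` V \<subseteq> V"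
  shows "fg_iso W g V f"
proof -
  obtain h where h: "bij_betw h V W" "\<forall>x\<in>V. h (f x) = g (h x)"
    using assms(1) unfolding fg_iso_def by blast
  have "inv_into V h (g y) = f (inv_into V h y)" if "y \<in> W" for y
  proof -
    obtain x where x: "x \<in> V" "y = h x"
      using \<open>y \<in> W\<close> h(1) by (auto simp: bij_betw_def)
    have "inv_into V h (g y) = inv_into V h (h (f x))" using h(2) x by simp
    also have "\<dots> = f x" using h(1) x assms(2) by (auto simp: bij_betw_def)
    also have "\<dots> = f (inv_into V h y)" using h(1) x by (simp add: bij_betw_def)
    finally show ?thesis .
  qed
  then show ?thesis
    unfolding fg_iso_def using bij_betw_inv_into[OF h(1)] by blast
qed

lemma fg_iso_prod:
  assumes "fg_iso V f V' f'" and "fg_iso W g W' g'"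
  shows "fg_iso (V \<times> W) (map_prod f g) (V' \<times> W') (map_prod f' g')"
proof -
  obtain h where "bij_betw h V V'" "\<forall>x\<in>V. h (f x) = f' (h x)"
    using assms(1) unfolding fg_iso_def by blast
  moreover obtain k where "bij_betw k W W'" "\<forall>y\<in>W. k (g y) = g' (k y)"
    using assms(2) unfolding fg_iso_def by blast
  ultimately show ?thesis
    unfolding fg_iso_def by (intro exI[of _ "map_prod h k"]) (auto intro: bij_betw_map_prod)
qed

lemma cyclic_on_enumeration:
  assumes "cyclic_on f c" and "s \<in> c"
  shows "bij_betw (\<lambda>i. (f ^^ i) s) {0..<card c} c" and "(f ^^ card c) s = s"
proof -
  have c: "c = orbit f s" using orbit_cyclic_eq3[OF assms] by simp
  then have s: "s \<in> orbit f s" using assms(2) by simp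
  define d where "d = funpow_dist1 f s s"
  have img: "(\<lambda>i. (f ^^ i) s) ` {0..<d} = c"
    unfolding d_def c by (rule orbit_conv_funpow_dist1[OF s, symmetric])
  have inj: "inj_on (\<lambda>i. (f ^^ i) s) {0..<d}"
    unfolding d_def by (rule inj_on_funpow_dist1[OF s])
  have "card c = d" using card_image[OF inj] img by simp
  then show "bij_betw (\<lambda>i. (f ^^ i) s) {0..<card c} c" "(f ^^ card c) s = s"
    using inj img funpow_dist1_prop[OF s] unfolding bij_betw_def d_def by simp_all
qed

lemma funpow_left_inverse:
  assumes "\<And>u. u \<in> U \<Longrightarrow> g u \<in> U" and "\<And>u. u \<in> U \<Longrightarrow> f (g u) = u" and "u \<in> U"
  shows "(f ^^ n) ((g ^^ n) u) = u"
proof (induction n)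
  case (Suc n)
  have "(g ^^ n) u \<in> U" using assms(1,3) by (induction n) auto
  then show ?case using Suc by (simp add: funpow_swap1[of f] assms(2))
qed simp

definition cycle_point :: "('a \<Rightarrow> 'a) \<Rightarrow> 'a set \<Rightarrow> nat \<Rightarrow> 'a" where
  "cycle_point f c i = (f ^^ i) (SOME s. s \<in> c)"

locale periodic_map =
  fixes U :: "'a set" and f :: "'a \<Rightarrow> 'a" and N :: nat
  assumes maps_into: "f ` U \<subseteq> U"
    and period_pos: "0 < N"
    and periodic: "u \<in> U \<Longrightarrow> (f ^^ N) u = u"
begin

lemma f_in: "u \<in> U \<Longrightarrow> f u \<in> U"
  using maps_into by blast

lemma funpow_in: "u \<in> U \<Longrightarrow> (f ^^ n) u \<in> U"
  using f_in by (induction n) auto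

lemma is_cycle_union: "is_cycle_union U f"
  unfolding is_cycle_union_def using maps_into period_pos periodic by blast

lemma self_in_orbit: "u \<in> U \<Longrightarrow> u \<in> orbit f u"
  using period_pos periodic by (force simp: orbit_altdef)

lemma orbit_of_eq_orbit: "u \<in> U \<Longrightarrow> orbit_of f u = orbit f u"
  by (simp add: orbit_of_def orbit_altdef_self_in self_in_orbit)

lemma cyclic_on_cycle:
  assumes "c \<in> cycles_of U f" shows "cyclic_on f c"
proof -
  obtain u where u: "u \<in> U" "c = orbit_of f u"
    using assms unfolding cycles_of_def by blast
  then have c: "c = orbit f u" by (simp add: orbit_of_eq_orbit)
  then have "u \<in> c" using self_in_orbit[OF u(1)] by simp
  then show ?thesis using c by (rule cyclic_on_singleI)
qed

lemma cycle_subset: "c \<in> cycles_of U f \<Longrightarrow> c \<subseteq> U"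
  unfolding cycles_of_def orbit_of_def using funpow_in by auto

lemma cycle_eqI:
  assumes "c \<in> cycles_of U f" "c' \<in> cycles_of U f" "z \<in> c" "z \<in> c'"
  shows "c = c'"
  using orbit_cyclic_eq3 cyclic_on_cycle assms by metis

lemma some_in_cycle: "c \<in> cycles_of U f \<Longrightarrow> (SOME s. s \<in> c) \<in> c"
  using cyclic_on_cycle by (simp add: cyclic_on_alldef some_in_eq)

lemma cycle_point_in: "c \<in> cycles_of U f \<Longrightarrow> cycle_point f c i \<in> c"
  unfolding cycle_point_def using cyclic_on_funpow_in cyclic_on_cycle some_in_cycle by metis

lemma cycle_point_bij_betw:
  assumes "c \<in> cycles_of U f"
  shows "bij_betw (cycle_point f c) {0..<card c} c"
    and "(f ^^ card c) (SOME s. s \<in> c) = (SOME s. s \<in> c)"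
  using cyclic_on_enumeration[OF cyclic_on_cycle[OF assms] some_in_cycle[OF assms]]
  unfolding cycle_point_def by simp_all

lemma cycle_point_Suc:
  assumes "c \<in> cycles_of U f"
  shows "f (cycle_point f c i) = cycle_point f c (Suc i mod card c)"
  using funpow_mod_eq[OF cycle_point_bij_betw(2)[OF assms], of "Suc i"]
  by (simp add: cycle_point_def)

lemma cycle_points_bij_betw:
  "bij_betw (\<lambda>(c, i). cycle_point f c i) (SIGMA c : cycles_of U f. {0..<card c}) U"
proof -
  let ?C = "cycles_of U f"
  have "inj_on (\<lambda>(c, i). cycle_point f c i) (SIGMA c : ?C. {0..<card c})"
  proof (rule inj_onI)
    fix p q
    assume "p \<in> (SIGMA c : ?C. {0..<card c})" "q \<in> (SIGMA c : ?C. {0..<card c})"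
      and eq: "(\<lambda>(c, i). cycle_point f c i) p = (\<lambda>(c, i). cycle_point f c i) q"
    then obtain c i c' i' where pq: "p = (c, i)" "q = (c', i')"
      and c: "c \<in> ?C" "i < card c" and c': "c' \<in> ?C" "i' < card c'"
      by auto
    have eq': "cycle_point f c i = cycle_point f c' i'" using eq pq by simp
    then have "c = c'"
      using cycle_eqI[OF c(1) c'(1) cycle_point_in[OF c(1)], of i] cycle_point_in[OF c'(1), of i'] by simp
    moreover have "i = i'"
    proof (rule inj_onD[OF bij_betw_imp_inj_on[OF cycle_point_bij_betw(1)[OF c(1)]]])
      show "cycle_point f c i = cycle_point f c i'" using eq' \<open>c = c'\<close> by simp
    qed (use c c' \<open>c = c'\<close> in auto)
    ultimately show "p = q" using pq by simp
  qed
  moreover have "(\<lambda>(c, i). cycle_point f c i) ` (SIGMA c : ?C. {0..<card c}) = U"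
  proof (intro equalityI subsetI)
    fix u assume "u \<in> (\<lambda>(c, i). cycle_point f c i) ` (SIGMA c : ?C. {0..<card c})"
    then obtain c i where "c \<in> ?C" "u = cycle_point f c i" by auto
    then show "u \<in> U" using cycle_point_in cycle_subset by blast
  next
    fix u assume u: "u \<in> U"
    define c where "c = orbit_of f u"
    have c: "c \<in> ?C" using u by (simp add: c_def cycles_of_def)
    have "u \<in> c" using u self_in_orbit by (simp add: c_def orbit_of_eq_orbit)
    then have "u \<in> cycle_point f c ` {0..<card c}"
      using bij_betw_imp_surj_on[OF cycle_point_bij_betw(1)[OF c]] by simp
    then obtain i where "i < card c" "u = cycle_point f c i" by auto
    with c show "u \<in> (\<lambda>(c, i). cycle_point f c i) ` (SIGMA c : ?C. {0..<card c})"
      by (intro image_eqI[of _ _ "(c, i)"]) simp_all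
  qed
  ultimately show ?thesis by (simp add: bij_betw_def)
qed

definition predecessor :: "'a \<Rightarrow> 'a" where
  "predecessor = f ^^ (N - 1)"

lemma predecessor_in: "u \<in> U \<Longrightarrow> predecessor u \<in> U"
  by (simp add: predecessor_def funpow_in)

lemma f_predecessor: "u \<in> U \<Longrightarrow> f (predecessor u) = u"
  using periodic period_pos unfolding predecessor_def by (metis Suc_diff_1 comp_apply funpow.simps(2))

lemma predecessor_f: "u \<in> U \<Longrightarrow> predecessor (f u) = u"
  using periodic period_pos unfolding predecessor_def by (metis Suc_diff_1 comp_apply funpow_Suc_right)

lemma funpow_predecessor_in: "u \<in> U \<Longrightarrow> (predecessor ^^ n) u \<in> U"
  using predecessor_in by (induction n) auto

definition flower_coords :: "('b \<Rightarrow> nat) \<Rightarrow> 'a set \<times> nat \<times> 'b \<Rightarrow> 'b \<times> 'a" where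
  "flower_coords depth q =
     (case q of (c, i, x) \<Rightarrow> (x, (predecessor ^^ depth x) (cycle_point f c i)))"

lemma flower_coords_bij_betw:
  "bij_betw (flower_coords depth) (SIGMA c : cycles_of U f. {0..<card c} \<times> V) (V \<times> U)"
proof -
  let ?C = "cycles_of U f" and ?E = "\<lambda>(c, i). cycle_point f c i"
  note E = cycle_points_bij_betw
  have undo: "(f ^^ n) ((predecessor ^^ n) u) = u" "(predecessor ^^ n) ((f ^^ n) u) = u"
    if "u \<in> U" for u n
    using funpow_left_inverse[of U predecessor f, OF predecessor_in f_predecessor that]
      funpow_left_inverse[of U f predecessor, OF f_in predecessor_f that] by auto
  have "inj_on (flower_coords depth) (SIGMA c : ?C. {0..<card c} \<times> V)"
  proof (rule inj_onI)
    fix p q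
    assume "p \<in> (SIGMA c : ?C. {0..<card c} \<times> V)" "q \<in> (SIGMA c : ?C. {0..<card c} \<times> V)"
      and eq: "flower_coords depth p = flower_coords depth q"
    then obtain c i x c' i' x' where pq: "p = (c, i, x)" "q = (c', i', x')"
      and ci: "(c, i) \<in> (SIGMA c : ?C. {0..<card c})" and ci': "(c', i') \<in> (SIGMA c : ?C. {0..<card c})"
      by auto
    have x: "x' = x" using eq pq by (simp add: flower_coords_def)
    have "(predecessor ^^ depth x) (?E (c, i)) = (predecessor ^^ depth x) (?E (c', i'))"
      using eq pq x by (simp add: flower_coords_def)
    then have "?E (c, i) = ?E (c', i')"
      using undo(1) bij_betw_apply[OF E ci] bij_betw_apply[OF E ci'] by metis
    then have "(c, i) = (c', i')" using inj_onD[OF bij_betw_imp_inj_on[OF E] _ ci ci'] by blast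
    then show "p = q" using pq x by simp
  qed
  moreover have "flower_coords depth ` (SIGMA c : ?C. {0..<card c} \<times> V) = V \<times> U"
  proof (intro equalityI subsetI)
    fix y assume "y \<in> flower_coords depth ` (SIGMA c : ?C. {0..<card c} \<times> V)"
    then obtain c i x where "(c, i) \<in> (SIGMA c : ?C. {0..<card c})" "x \<in> V"
      and y: "y = flower_coords depth (c, i, x)" by auto
    then show "y \<in> V \<times> U"
      using bij_betw_apply[OF E] funpow_predecessor_in by (auto simp: flower_coords_def)
  next
    fix y assume "y \<in> V \<times> U"
    then obtain x u where y: "y = (x, u)" "x \<in> V" "u \<in> U" by auto
    then have "(f ^^ depth x) u \<in> ?E ` (SIGMA c : ?C. {0..<card c})"
      using bij_betw_imp_surj_on[OF E] funpow_in by simp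
    then obtain c i where ci: "(c, i) \<in> (SIGMA c : ?C. {0..<card c})"
      and "cycle_point f c i = (f ^^ depth x) u" by auto
    then have "flower_coords depth (c, i, x) = y" using y undo(2) by (simp add: flower_coords_def)
    then show "y \<in> flower_coords depth ` (SIGMA c : ?C. {0..<card c} \<times> V)"
      using ci y by force
  qed
  ultimately show ?thesis by (simp add: bij_betw_def)
qed

lemma card_cycle_pos:
  assumes "c \<in> cycles_of U f" shows "0 < card c"
proof -
  have "cyclic_on f c" using assms by (rule cyclic_on_cycle)
  then have "finite c" "c \<noteq> {}" by (rule finite_cyclic_on, simp add: cyclic_on_alldef)
  then show ?thesis by (simp add: card_gt_0_iff)
qed

lemma flower_coords_step:
  assumes "t r = r" and "depth r = 0"
    and depth_step: "x \<noteq> r \<Longrightarrow> depth x = Suc (depth (t x))"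
    and c: "c \<in> cycles_of U f"
  shows "flower_coords depth (c, flower_map (card c) t r (i, x))
           = map_prod t f (flower_coords depth (c, i, x))"
proof (cases "x = r")
  case True
  then show ?thesis
    using assms cycle_point_Suc[OF c] by (simp add: flower_map_def flower_coords_def)
next
  case False
  have "(predecessor ^^ depth (t x)) (cycle_point f c i) \<in> U"
    using funpow_predecessor_in cycle_point_in[OF c] cycle_subset[OF c] by blast
  then show ?thesis
    using False depth_step f_predecessor by (simp add: flower_map_def flower_coords_def)
qed

lemma flower_union_iso:
  assumes "t ` V \<subseteq> V" and "r \<in> V" and "t r = r" and "depth r = 0"
    and "\<And>x. x \<in> V \<Longrightarrow> x \<noteq> r \<Longrightarrow> depth x = Suc (depth (t x))"
  shows "fg_iso (V \<times> U) (map_prod t f)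
           (SIGMA c : cycles_of U f. flower_verts (card c) V)
           (\<lambda>q. (fst q, flower_map (card (fst q)) t r (snd q)))"
proof (rule fg_iso_sym)
  show "fg_iso (SIGMA c : cycles_of U f. flower_verts (card c) V)
          (\<lambda>q. (fst q, flower_map (card (fst q)) t r (snd q))) (V \<times> U) (map_prod t f)"
    unfolding fg_iso_def flower_verts_def
  proof (intro exI conjI ballI)
    show "bij_betw (flower_coords depth) (SIGMA c : cycles_of U f. {0..<card c} \<times> V) (V \<times> U)"
      by (rule flower_coords_bij_betw)
  next
    fix q assume "q \<in> (SIGMA c : cycles_of U f. {0..<card c} \<times> V)"
    then obtain c i x where q: "q = (c, i, x)" and "c \<in> cycles_of U f" "x \<in> V" by auto
    then have "flower_coords depth (c, flower_map (card c) t r (i, x))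
               = map_prod t f (flower_coords depth (c, i, x))"
      by (intro flower_coords_step assms(3,4,5))
    then show "flower_coords depth (fst q, flower_map (card (fst q)) t r (snd q))
               = map_prod t f (flower_coords depth q)"
      using q by simp
  qed
  show "(\<lambda>q. (fst q, flower_map (card (fst q)) t r (snd q))) `
          (SIGMA c : cycles_of U f. flower_verts (card c) V)
        \<subseteq> (SIGMA c : cycles_of U f. flower_verts (card c) V)"
  proof (rule image_subsetI)
    fix q assume "q \<in> (SIGMA c : cycles_of U f. flower_verts (card c) V)"
    then obtain c i x where "q = (c, i, x)" "c \<in> cycles_of U f" "i < card c" "x \<in> V"
      by (auto simp: flower_verts_def)
    then show "(fst q, flower_map (card (fst q)) t r (snd q))
               \<in> (SIGMA c : cycles_of U f. flower_verts (card c) V)"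
      using assms(1,2) card_cycle_pos by (auto simp: flower_verts_def flower_map_def)
  qed
qed

end

lemma two_power_times_odd_eqD:
  fixes u v :: nat
  assumes "2 ^ a * u = 2 ^ b * v" and "odd u" and "odd v"
  shows "a = b"
proof -
  have le: "b \<le> a" if "2 ^ a * u = 2 ^ b * v" "odd u" for a b u v :: nat
  proof -
    have "2 ^ b dvd 2 ^ a * u" using that(1) by simp
    moreover have "coprime ((2::nat) ^ b) u" using that(2) by simp
    ultimately have "(2::nat) ^ b dvd 2 ^ a" using coprime_dvd_mult_left_iff by blast
    then show "b \<le> a" by (simp add: dvd_power_iff_le)
  qed
  show ?thesis using le[OF assms(1,2)] le[OF assms(1)[symmetric] assms(3)] by simp
qed

abbreviation binary_value :: "nat list \<Rightarrow> nat" where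
  "binary_value \<equiv> horner_sum (\<lambda>d. d) 2"

lemma binary_value_less: "set xs \<subseteq> {..<2} \<Longrightarrow> binary_value xs < (2::nat) ^ length xs"
  by (induction xs) auto

lemma binary_value_inj:
  "length xs = length ys \<Longrightarrow> set xs \<subseteq> {..<2} \<Longrightarrow> set ys \<subseteq> {..<2}
    \<Longrightarrow> binary_value xs = binary_value ys \<Longrightarrow> xs = ys"
proof (induction xs arbitrary: ys)
  case (Cons a xs)
  then obtain b ys' where ys: "ys = b # ys'" by (cases ys) auto
  have "a + 2 * binary_value xs = b + 2 * binary_value ys'" "a < 2" "b < 2"
    using Cons.prems ys by auto
  then have "a = b" "binary_value xs = binary_value ys'" by presburger+
  then show ?case using Cons ys by simp
qed simp

fun binary_digits :: "nat \<Rightarrow> nat \<Rightarrow> nat list" where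
  "binary_digits n 0 = []"
| "binary_digits n (Suc L) = n mod 2 # binary_digits (n div 2) L"

lemma length_binary_digits [simp]: "length (binary_digits n L) = L"
  by (induction L arbitrary: n) auto

lemma set_binary_digits: "set (binary_digits n L) \<subseteq> {..<2}"
  by (induction L arbitrary: n) auto

lemma binary_value_binary_digits: "binary_value (binary_digits n L) = n mod 2 ^ L"
  by (induction L arbitrary: n) (simp_all add: mod_mult2_eq)

lemma binary_tree_verts_iff:
  "xs \<in> tree_verts 2 \<theta> \<longleftrightarrow> length xs \<le> \<theta> \<and> set xs \<subseteq> {..<2} \<and> (xs \<noteq> [] \<longrightarrow> hd xs = 1)"
proof (cases xs)
  case (Cons a ys)
  have "(\<forall>i. 0 < i \<and> i < length xs \<longrightarrow> xs ! i < 2) \<longleftrightarrow> set ys \<subseteq> {..<2}"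
    unfolding Cons by (auto simp: subset_iff in_set_conv_nth gr0_conv_Suc)
  then show ?thesis using Cons by (auto simp: tree_verts_def)
qed (simp add: tree_verts_def)

text \<open>The vertex \<open>[1, b\<^sub>1, \<dots>, b\<^sub>j\<^sub>-\<^sub>1]\<close> at depth \<open>j\<close> is sent to
  \<open>2 ^ (\<theta> - j) * (1 + 2 b\<^sub>1 + \<dots> + 2 ^ (j - 1) b\<^sub>j\<^sub>-\<^sub>1)\<close>; deleting the last digit doubles
  this modulo \<open>2 ^ \<theta>\<close>.\<close>
definition tree_index :: "nat \<Rightarrow> nat list \<Rightarrow> nat" where
  "tree_index \<theta> xs = 2 ^ (\<theta> - length xs) * binary_value xs"

lemma tree_index_less:
  assumes "xs \<in> tree_verts 2 \<theta>" shows "tree_index \<theta> xs < 2 ^ \<theta>"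
proof -
  have xs: "length xs \<le> \<theta>" "set xs \<subseteq> {..<2}" using assms binary_tree_verts_iff by auto
  have "tree_index \<theta> xs < 2 ^ (\<theta> - length xs) * 2 ^ length xs"
    unfolding tree_index_def using binary_value_less[OF xs(2)] by simp
  also have "\<dots> = 2 ^ \<theta>" using xs(1) by (simp flip: power_add)
  finally show ?thesis .
qed

lemma tree_map_in: "xs \<in> tree_verts 2 \<theta> \<Longrightarrow> tree_map xs \<in> tree_verts 2 \<theta>"
  unfolding tree_map_def binary_tree_verts_iff
  by (cases xs rule: rev_cases) (auto simp: hd_append)

lemma tree_index_tree_map:
  assumes "xs \<in> tree_verts 2 \<theta>"
  shows "tree_index \<theta> (tree_map xs) = A_map (2 ^ \<theta>) (tree_index \<theta> xs)"
proof (cases xs rule: rev_cases)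
  case Nil then show ?thesis by (simp add: tree_map_def tree_index_def A_map_def)
next
  case (snoc ys b)
  have ys: "ys \<in> tree_verts 2 \<theta>" "length ys < \<theta>"
    using tree_map_in[OF assms] assms snoc by (auto simp: tree_map_def binary_tree_verts_iff)
  have "2 * tree_index \<theta> xs = 2 * 2 ^ (\<theta> - Suc (length ys)) * (binary_value ys + 2 ^ length ys * b)"
    by (simp add: snoc tree_index_def horner_sum_append)
  also have "\<dots> = tree_index \<theta> ys + b * 2 ^ \<theta>"
    using ys(2) by (simp add: tree_index_def algebra_simps Suc_diff_Suc flip: power_Suc power_add)
  finally show ?thesis
    using tree_index_less[OF ys(1)] by (simp add: snoc tree_map_def A_map_def)
qed

lemma tree_index_pos:
  assumes "xs \<in> tree_verts 2 \<theta>" and "xs \<noteq> []" shows "0 < tree_index \<theta> xs"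
  using assms by (cases xs) (auto simp: tree_index_def binary_tree_verts_iff)

lemma inj_on_tree_index: "inj_on (tree_index \<theta>) (tree_verts 2 \<theta>)"
proof (rule inj_onI)
  fix xs ys assume xs: "xs \<in> tree_verts 2 \<theta>" and ys: "ys \<in> tree_verts 2 \<theta>"
    and eq: "tree_index \<theta> xs = tree_index \<theta> ys"
  consider "xs = []" "ys = []" | "xs \<noteq> []" "ys \<noteq> []"
    using tree_index_pos[OF xs] tree_index_pos[OF ys] eq by (force simp: tree_index_def)
  then show "xs = ys"
  proof cases
    case 2
    have odd: "odd (binary_value xs)" "odd (binary_value ys)"
      using 2 xs ys by (auto simp: binary_tree_verts_iff neq_Nil_conv)
    have "\<theta> - length xs = \<theta> - length ys"
      using two_power_times_odd_eqD[OF eq[unfolded tree_index_def] odd] .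
    moreover have "length xs \<le> \<theta>" "length ys \<le> \<theta>" using xs ys by (simp_all add: binary_tree_verts_iff)
    ultimately have "length xs = length ys" by linarith
    moreover from this have "binary_value xs = binary_value ys" using eq by (simp add: tree_index_def)
    ultimately show ?thesis using binary_value_inj xs ys by (simp add: binary_tree_verts_iff)
  qed simp
qed

lemma tree_index_surj: "t < 2 ^ \<theta> \<Longrightarrow> t \<in> tree_index \<theta> ` tree_verts 2 \<theta>"
proof (induction \<theta> arbitrary: t)
  case 0
  have "[] \<in> tree_verts 2 0" "tree_index 0 [] = t"
    using "0" by (simp_all add: binary_tree_verts_iff tree_index_def)
  then show ?case by (rule rev_image_eqI[OF _ sym])
next
  case (Suc \<theta>)
  show ?case
  proof (cases "odd t")
    case True
    let ?xs = "binary_digits t (Suc \<theta>)"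
    have "hd ?xs = 1" using True by (simp add: odd_iff_mod_2_eq_one)
    then have "?xs \<in> tree_verts 2 (Suc \<theta>)"
      using set_binary_digits by (simp add: binary_tree_verts_iff)
    moreover have "tree_index (Suc \<theta>) ?xs = t"
      using Suc.prems by (simp add: tree_index_def binary_value_binary_digits)
    ultimately show ?thesis by (rule rev_image_eqI[OF _ sym])
  next
    case False
    have "t div 2 \<in> tree_index \<theta> ` tree_verts 2 \<theta>" using Suc by simp
    then obtain xs where xs: "xs \<in> tree_verts 2 \<theta>" "tree_index \<theta> xs = t div 2" by auto
    have len: "length xs \<le> \<theta>" using xs(1) by (simp add: binary_tree_verts_iff)
    then have "xs \<in> tree_verts 2 (Suc \<theta>)" using xs(1) by (simp add: binary_tree_verts_iff)
    moreover have "tree_index (Suc \<theta>) xs = 2 * tree_index \<theta> xs"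
      using len by (simp add: tree_index_def Suc_diff_le)
    then have "tree_index (Suc \<theta>) xs = t" using xs(2) False by simp
    ultimately show ?thesis by (rule rev_image_eqI[OF _ sym])
  qed
qed

lemma A_two_power_iso_tree: "fg_iso (A_verts (2 ^ \<theta>)) (A_map (2 ^ \<theta>)) (tree_verts 2 \<theta>) tree_map"
proof (rule fg_iso_sym)
  have "tree_index \<theta> ` tree_verts 2 \<theta> = A_verts (2 ^ \<theta>)"
    unfolding A_verts_def
    using tree_index_less tree_index_surj by (intro equalityI image_subsetI subsetI) simp_all
  then have "bij_betw (tree_index \<theta>) (tree_verts 2 \<theta>) (A_verts (2 ^ \<theta>))"
    using inj_on_tree_index by (simp add: bij_betw_def)
  then show "fg_iso (tree_verts 2 \<theta>) tree_map (A_verts (2 ^ \<theta>)) (A_map (2 ^ \<theta>))"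
    unfolding fg_iso_def using tree_index_tree_map by blast
  show "tree_map ` tree_verts 2 \<theta> \<subseteq> tree_verts 2 \<theta>" using tree_map_in by blast
qed

lemma A_mult_iso_prod:
  assumes "coprime P Q" and "0 < P" and "0 < Q"
  shows "fg_iso (A_verts (P * Q)) (A_map (P * Q)) (A_verts P \<times> A_verts Q) (map_prod (A_map P) (A_map Q))"
  unfolding fg_iso_def
proof (intro exI conjI ballI)
  let ?h = "\<lambda>x. (x mod P, x mod Q)"
  have crt: "\<exists>!x. x < P * Q \<and> [x = a] (mod P) \<and> [x = b] (mod Q)" for a b
    using binary_chinese_remainder_unique_nat assms by simp
  have "inj_on ?h (A_verts (P * Q))"
  proof (rule inj_onI)
    fix x y assume "x \<in> A_verts (P * Q)" "y \<in> A_verts (P * Q)" "?h x = ?h y"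
    then show "x = y" using crt[of x x] by (auto simp: A_verts_def cong_def)
  qed
  moreover have "?h ` A_verts (P * Q) = A_verts P \<times> A_verts Q"
  proof (intro equalityI subsetI)
    fix p assume "p \<in> ?h ` A_verts (P * Q)"
    then show "p \<in> A_verts P \<times> A_verts Q" using assms by (auto simp: A_verts_def)
  next
    fix p assume "p \<in> A_verts P \<times> A_verts Q"
    then obtain a b where p: "p = (a, b)" "a < P" "b < Q" by (auto simp: A_verts_def)
    obtain x where "x < P * Q" "[x = a] (mod P)" "[x = b] (mod Q)" using crt by blast
    then have "x \<in> A_verts (P * Q)" "?h x = p" using p by (simp_all add: A_verts_def cong_def)
    then show "p \<in> ?h ` A_verts (P * Q)" by (rule rev_image_eqI[OF _ sym])
  qed
  ultimately show "bij_betw ?h (A_verts (P * Q)) (A_verts P \<times> A_verts Q)"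
    by (simp add: bij_betw_def)
  fix x
  show "?h (A_map (P * Q) x) = map_prod (A_map P) (A_map Q) (?h x)"
    by (simp add: A_map_def mod_mod_cancel mod_mult_right_eq)
qed

lemma A_map_funpow: "x < \<mu> \<Longrightarrow> (A_map \<mu> ^^ n) x = 2 ^ n * x mod \<mu>"
  by (induction n) (simp_all add: A_map_def mod_mult_right_eq mult.assoc)

lemma periodic_map_A:
  assumes "odd \<mu>" shows "periodic_map (A_verts \<mu>) (A_map \<mu>) (totient \<mu>)"
proof
  show "A_map \<mu> ` A_verts \<mu> \<subseteq> A_verts \<mu>"
    using assms by (auto simp: A_map_def A_verts_def odd_pos)
  show "0 < totient \<mu>" using assms by (simp add: odd_pos)
  fix x assume "x \<in> A_verts \<mu>"
  moreover have "[2 ^ totient \<mu> = 1] (mod \<mu>)" using euler_theorem[of 2 \<mu>] assms by simp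
  ultimately show "(A_map \<mu> ^^ totient \<mu>) x = x"
    by (simp add: A_verts_def A_map_funpow cong_def mod_mult_left_eq[of "2 ^ totient \<mu>", symmetric])
qed

theorem proposition5:
  fixes m \<mu> \<theta> :: nat
  assumes "m = 2 ^ \<theta> * \<mu>" and "\<theta> \<ge> 1" and "odd \<mu>"
  shows "is_cycle_union (A_verts \<mu>) (A_map \<mu>)
         \<and> fg_iso (A_verts m) (A_map m) (union_verts \<mu> \<theta>) union_map"
proof
  interpret periodic_map "A_verts \<mu>" "A_map \<mu>" "totient \<mu>"
    using assms(3) by (rule periodic_map_A)
  show "is_cycle_union (A_verts \<mu>) (A_map \<mu>)" by (rule is_cycle_union)
  have "fg_iso (A_verts m) (A_map m)
          (A_verts (2 ^ \<theta>) \<times> A_verts \<mu>) (map_prod (A_map (2 ^ \<theta>)) (A_map \<mu>))"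
    unfolding assms(1) using assms(3) by (intro A_mult_iso_prod) (simp_all add: odd_pos)
  moreover have "fg_iso (A_verts (2 ^ \<theta>) \<times> A_verts \<mu>) (map_prod (A_map (2 ^ \<theta>)) (A_map \<mu>))
                   (tree_verts 2 \<theta> \<times> A_verts \<mu>) (map_prod tree_map (A_map \<mu>))"
    by (rule fg_iso_prod[OF A_two_power_iso_tree fg_iso_refl])
  moreover have "fg_iso (tree_verts 2 \<theta> \<times> A_verts \<mu>) (map_prod tree_map (A_map \<mu>))
                   (union_verts \<mu> \<theta>) union_map"
    unfolding union_verts_def union_map_def[abs_def]
  proof (rule flower_union_iso[where depth = length])
    show "tree_map ` tree_verts 2 \<theta> \<subseteq> tree_verts 2 \<theta>" using tree_map_in by blast
  qed (auto simp: tree_root_def tree_map_def tree_verts_def)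
  ultimately show "fg_iso (A_verts m) (A_map m) (union_verts \<mu> \<theta>) union_map"
    using fg_iso_trans by metis
qed

end
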